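(* If $p<2q$, then $\rho(\mathcal{L}_\omega(\widehat{\mathcal{T}_{p/q}}))=\rho(\mathcal{L}_\omega(\mathcal{T}_{p/q}))$, where $\mathcal{L}_\omega(\mathcal{X})$ denotes the set of infinite words accepted by the automaton $\mathcal{X}$ and $\rho$ is applied elementwise.
   Context: Let $p>q>1$ be coprime integers, $A_p=\{0,\dots,p-1\}$ and $B=\{p-(2q-1),\dots,p-1\}$. For $n\in\mathbb{N}$ and $a\in\mathbb{Z}$, let $\tau(n,a)=\frac{np+a}{q}$, defined only when $q$ divides $np+a$. Let $\mathcal{T}_{p/q}$ (resp. $\widehat{\mathcal{T}_{p/q}}$) be the deterministic automaton with state set $\mathbb{N}$, alphabet $A_p$ (resp. $B$), initial state $0$, and transitions $n\xrightarrow{a}\tau(n,a)$ for $a$ in the alphabet with $\tau(n,a)$ defined. An infinite word is accepted if each of its finite prefixes labels a path starting at $0$. For an infinite word $a_1a_2\cdots$ of integers, $\rho(a_1a_2\cdots)=\sum_{i\ge 1} a_i\left(\frac{p}{q}\right)^{-i}$. *)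

theory Defs
  imports Complex_Main
begin

definition alphA :: "int \<Rightarrow> int set" where
  "alphA p = {0..p-1}"

definition alphB :: "int \<Rightarrow> int \<Rightarrow> int set" where
  "alphB p q = {p-(2*q-1)..p-1}"

definition tau :: "int \<Rightarrow> int \<Rightarrow> nat \<Rightarrow> int \<Rightarrow> nat option" where
  "tau p q n a = (if q dvd (int n * p + a) \<and> (int n * p + a) div q \<ge> 0
                  then Some (nat ((int n * p + a) div q)) else None)"

fun run :: "int set \<Rightarrow> int \<Rightarrow> int \<Rightarrow> nat \<Rightarrow> int list \<Rightarrow> nat option" where
  "run D p q n [] = Some n"
| "run D p q n (a # w) =
     (if a \<in> D then (case tau p q n a of None \<Rightarrow> None | Some m \<Rightarrow> run D p q m w)
      else None)"

text \<open>Infinite words a_1 a_2 ... are functions nat => int (w i = a_(i+1)).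
  A word is accepted if every finite prefix labels a path starting at 0.\<close>
definition omega_lang :: "int set \<Rightarrow> int \<Rightarrow> int \<Rightarrow> (nat \<Rightarrow> int) set" where
  "omega_lang D p q = {w. \<forall>k. run D p q 0 (map w [0..<k]) \<noteq> None}"

definition rho :: "int \<Rightarrow> int \<Rightarrow> (nat \<Rightarrow> int) \<Rightarrow> real" where
  "rho p q w = (\<Sum>i. real_of_int (w i) * (real_of_int p / real_of_int q) powi (- int (Suc i)))"

end

theory Submission
  imports Defs
begin

text \<open>A word w is accepted iff there are states s with s 0 = 0 and q s(k+1) = p s(k) + w(k);
  then rho(w) = lim q s(k) (q/p)^k, so accepted words whose state sequences stay a bounded
  distance apart have the same value. In T_{p/q} every state n has exactly one incoming
  transition, from its parent floor(qn/p). Along a run of the automaton over B all digits lie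
  in [-p, p), so the parent of s(k+1) is s(k) or s(k) - 1; hence the ancestors at level j of
  s(K) lie in [s(j) - 2p, s(j)] and decrease with K. Their eventual values form an infinite
  path of T_{p/q} within distance 2p of s. The hypothesis p < 2q is only needed for A_p \<subseteq> B,
  which gives the other inclusion.\<close>

definition run_states :: "int set \<Rightarrow> int \<Rightarrow> int \<Rightarrow> (nat \<Rightarrow> int) \<Rightarrow> (nat \<Rightarrow> nat) \<Rightarrow> bool" where
  "run_states D p q w s \<longleftrightarrow>
     s 0 = 0 \<and> (\<forall>k. w k \<in> D \<and> q * int (s (Suc k)) = p * int (s k) + w k)"

lemma run_snoc:
  "run D p q n (xs @ [a]) = (case run D p q n xs of None \<Rightarrow> None
      | Some m \<Rightarrow> if a \<in> D then tau p q m a else None)"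
  by (induction xs arbitrary: n) (auto split: option.splits)

lemma tau_eq_Some_iff:
  assumes "q \<noteq> 0"
  shows "tau p q n a = Some m \<longleftrightarrow> q * int m = int n * p + a"
proof
  assume "tau p q n a = Some m"
  then have "q dvd int n * p + a" and "int m = (int n * p + a) div q"
    unfolding tau_def by (auto split: if_splits)
  then show "q * int m = int n * p + a" by simp
next
  assume eq: "q * int m = int n * p + a"
  then have "(int n * p + a) div q = int m" using assms by (metis nonzero_mult_div_cancel_left)
  with eq show "tau p q n a = Some m" unfolding tau_def by (metis dvd_triv_left nat_int of_nat_0_le_iff)
qed

lemma omega_lang_iff_run_states:
  assumes "q \<noteq> 0"
  shows "w \<in> omega_lang D p q \<longleftrightarrow> (\<exists>s. run_states D p q w s)"
proof
  assume "w \<in> omega_lang D p q"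
  define s where "s k = the (run D p q 0 (map w [0..<k]))" for k
  have run_s: "run D p q 0 (map w [0..<k]) = Some (s k)" for k
    using \<open>w \<in> omega_lang D p q\<close> unfolding omega_lang_def s_def by auto
  have "w k \<in> D \<and> tau p q (s k) (w k) = Some (s (Suc k))" for k
    using run_s[of "Suc k"] run_s[of k] by (simp add: run_snoc split: if_splits)
  then have "run_states D p q w s"
    using run_s[of 0] assms by (simp add: run_states_def tau_eq_Some_iff mult.commute)
  then show "\<exists>s. run_states D p q w s" by blast
next
  assume "\<exists>s. run_states D p q w s"
  then obtain s where s: "run_states D p q w s" by blast
  have "run D p q 0 (map w [0..<k]) = Some (s k)" for k
  proof (induction k)
    case 0
    then show ?case using s by (simp add: run_states_def)
  next
    case (Suc k)
    have "w k \<in> D" and "tau p q (s k) (w k) = Some (s (Suc k))"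
      using s assms by (simp_all add: run_states_def tau_eq_Some_iff mult.commute)
    then show ?case using Suc by (simp add: run_snoc)
  qed
  then show "w \<in> omega_lang D p q" unfolding omega_lang_def by simp
qed

lemma run_states_mono: "run_states D p q w s \<Longrightarrow> D \<subseteq> D' \<Longrightarrow> run_states D' p q w s"
  unfolding run_states_def by blast

lemma omega_lang_mono: "q \<noteq> 0 \<Longrightarrow> D \<subseteq> D' \<Longrightarrow> omega_lang D p q \<subseteq> omega_lang D' p q"
  using run_states_mono by (blast dest: omega_lang_iff_run_states)

lemma run_states_partial_sum:
  assumes "p \<noteq> 0" "run_states D p q w s"
  shows "(\<Sum>i<k. real_of_int (w i) * (real_of_int q / real_of_int p) ^ Suc i)
          = real_of_int q * real (s k) * (real_of_int q / real_of_int p) ^ k"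
proof (induction k)
  case 0
  then show ?case using assms(2) by (simp add: run_states_def)
next
  case (Suc k)
  define r where "r = real_of_int q / real_of_int p"
  have step: "real_of_int q * real (s (Suc k)) = real_of_int p * real (s k) + real_of_int (w k)"
    using assms(2) unfolding run_states_def by (metis of_int_add of_int_mult of_int_of_nat_eq)
  have "(\<Sum>i<Suc k. real_of_int (w i) * r ^ Suc i)
      = real_of_int q * real (s k) * r ^ k + real_of_int (w k) * r ^ Suc k"
    using Suc by (simp add: r_def)
  also have "\<dots> = r ^ Suc k * (real_of_int p * real (s k) + real_of_int (w k))"
    using assms(1) by (simp add: r_def field_simps)
  also have "\<dots> = real_of_int q * real (s (Suc k)) * r ^ Suc k"
    by (simp only: step[symmetric] mult.commute)
  finally show ?case unfolding r_def .
qed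

lemma rho_eq_suminf:
  "rho p q w = (\<Sum>i. real_of_int (w i) * (real_of_int q / real_of_int p) ^ Suc i)"
proof -
  have "(x::real) powi (- int (Suc i)) = inverse x ^ Suc i" for x i
    by (simp only: power_int_minus power_int_of_nat power_inverse)
  then show ?thesis unfolding rho_def by (simp only: inverse_divide)
qed

lemma rho_as_limit:
  assumes "0 < q" "q < p" "finite D" "run_states D p q w s"
  shows "(\<lambda>k. real_of_int q * real (s k) * (real_of_int q / real_of_int p) ^ k) \<longlonglongrightarrow> rho p q w"
proof -
  define r where "r = real_of_int q / real_of_int p"
  define C where "C = Max (abs ` D)"
  have p0: "p \<noteq> 0" using assms(1,2) by simp
  have r: "0 < r" "r < 1" using assms(1,2) unfolding r_def by auto
  have "\<bar>w k\<bar> \<le> C" for k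
    using assms(3,4) unfolding C_def run_states_def by auto
  then have bound: "norm (real_of_int (w k) * r ^ Suc k) \<le> real_of_int C * r ^ Suc k" for k
    using r by (simp add: abs_mult mult_right_mono flip: of_int_abs)
  have "summable (\<lambda>k. real_of_int C * r ^ Suc k)"
    using r by (intro summable_mult) (simp add: summable_geometric_iff)
  then have "summable (\<lambda>k. real_of_int (w k) * r ^ Suc k)"
    by (rule summable_comparison_test') (rule bound)
  then have "(\<lambda>k. \<Sum>i<k. real_of_int (w i) * r ^ Suc i) \<longlonglongrightarrow> rho p q w"
    unfolding rho_eq_suminf r_def by (rule summable_LIMSEQ)
  then show ?thesis unfolding r_def run_states_partial_sum[OF p0 assms(4)] .
qed

lemma rho_eq_if_run_states_close:
  assumes "0 < q" "q < p" "finite D" "finite D'"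
    and "run_states D p q w s" "run_states D' p q w' s'"
    and close: "\<And>k. \<bar>int (s k) - int (s' k)\<bar> \<le> C"
  shows "rho p q w = rho p q w'"
proof -
  define r where "r = real_of_int q / real_of_int p"
  have r: "0 < r" "r < 1" using assms(1,2) unfolding r_def by auto
  define d where "d k = real_of_int q * real (s k) * r ^ k - real_of_int q * real (s' k) * r ^ k" for k
  have "d \<longlonglongrightarrow> rho p q w - rho p q w'"
    unfolding d_def r_def using assms by (intro tendsto_diff rho_as_limit)
  moreover have "d \<longlonglongrightarrow> 0"
  proof (rule tendsto_0_le[where K = "real_of_int q * real_of_int C"])
    show "(\<lambda>k. r ^ k) \<longlonglongrightarrow> 0" using r by (intro LIMSEQ_power_zero) simp
    have "norm (d k) \<le> norm (r ^ k) * (real_of_int q * real_of_int C)" for k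
    proof -
      have "d k = (real_of_int q * r ^ k) * real_of_int (int (s k) - int (s' k))"
        unfolding d_def by (simp add: algebra_simps)
      then have "norm (d k) = (real_of_int q * r ^ k) * real_of_int \<bar>int (s k) - int (s' k)\<bar>"
        using r assms(1) by (simp add: abs_mult)
      also have "\<dots> \<le> (real_of_int q * r ^ k) * real_of_int C"
        using close[of k] r assms(1) by (intro mult_left_mono) simp_all
      finally show ?thesis using r by (simp add: algebra_simps)
    qed
    then show "\<forall>\<^sub>F k in sequentially. norm (d k) \<le> norm (r ^ k) * (real_of_int q * real_of_int C)"
      by simp
  qed
  ultimately show ?thesis using LIMSEQ_unique by fastforce
qed

text \<open>The unique state of T_{p/q} with a transition into n (its digit is q n - p parent n).\<close>
definition parent :: "int \<Rightarrow> int \<Rightarrow> nat \<Rightarrow> nat" where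
  "parent p q n = nat (q * int n div p)"

lemma int_parent: "0 < p \<Longrightarrow> 0 \<le> q \<Longrightarrow> int (parent p q n) = q * int n div p"
  unfolding parent_def by (simp add: pos_imp_zdiv_nonneg_iff)

lemma mono_parent: "0 < p \<Longrightarrow> 0 \<le> q \<Longrightarrow> mono (parent p q)"
  unfolding mono_def parent_def by (auto intro!: nat_mono zdiv_mono1 mult_left_mono)

lemma parent_digit_bounds:
  assumes "0 < p" "0 \<le> q"
  shows "0 \<le> q * int n - p * int (parent p q n)" "q * int n - p * int (parent p q n) < p"
  using assms by (simp_all add: int_parent minus_mult_div_eq_mod)

lemma parent_diff_le:
  assumes "0 < p" "0 \<le> q"
  shows "p * (int (parent p q b) - int (parent p q a)) \<le> q * (int b - int a) + p - 1"
  using parent_digit_bounds[OF assms, of a] parent_digit_bounds[OF assms, of b]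
  by (simp add: algebra_simps)

lemma run_states_parent_bounds:
  assumes "0 < q" "q < p" "run_states D p q w s" "D \<subseteq> {-p..<p}"
  shows "parent p q (s (Suc k)) \<le> s k" "s k \<le> parent p q (s (Suc k)) + 1"
proof -
  have p: "0 < p" "0 \<le> q" using assms(1,2) by simp_all
  have step: "q * int (s (Suc k)) = p * int (s k) + w k" and "-p \<le> w k" "w k < p"
    using assms(3,4) unfolding run_states_def by auto
  note digit = parent_digit_bounds[OF p, of "s (Suc k)", unfolded step]
  have "p * int (parent p q (s (Suc k))) < p * (int (s k) + 1)"
    using digit \<open>w k < p\<close> by (simp add: algebra_simps)
  then show "parent p q (s (Suc k)) \<le> s k"
    using p mult_less_cancel_left_pos by fastforce
  have "p * (int (s k) - 1) < p * (int (parent p q (s (Suc k))) + 1)"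
    using digit \<open>-p \<le> w k\<close> by (simp add: algebra_simps)
  then show "s k \<le> parent p q (s (Suc k)) + 1"
    using p mult_less_cancel_left_pos by fastforce
qed

lemma ancestor_bounds:
  assumes "0 < q" "q < p" "run_states D p q w s" "D \<subseteq> {-p..<p}"
  shows "(parent p q ^^ n) (s (j + n)) \<le> s j \<and>
    int (s j) \<le> int ((parent p q ^^ n) (s (j + n))) + 2 * p"
proof (induction n arbitrary: j)
  case 0
  then show ?case using assms(1,2) by simp
next
  case (Suc n)
  have p: "0 < p" "0 \<le> q" using assms(1,2) by simp_all
  define x where "x = (parent p q ^^ n) (s (Suc j + n))"
  have x: "x \<le> s (Suc j)" "int (s (Suc j)) \<le> int x + 2 * p"
    using Suc.IH[of "Suc j"] unfolding x_def by simp_all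
  have unfold: "(parent p q ^^ Suc n) (s (j + Suc n)) = parent p q x"
    unfolding x_def by simp
  note parent_bounds = run_states_parent_bounds[OF assms, of j]
  have "parent p q x \<le> parent p q (s (Suc j))"
    using x(1) mono_parent[OF p] by (rule monoD[rotated])
  with parent_bounds(1) have upper: "parent p q x \<le> s j" by simp
  have "q * (int (s (Suc j)) - int x) \<le> q * (2 * p)"
    using x p by (intro mult_left_mono) simp_all
  moreover have "p * 1 \<le> p * (p - q)"
    using assms(1,2) by (intro mult_left_mono) simp_all
  moreover have "p * int (s j) \<le> p * int (parent p q (s (Suc j))) + p"
  proof -
    have "int (s j) \<le> int (parent p q (s (Suc j))) + 1" using parent_bounds(2) by simp
    then show ?thesis using p(1) by (metis distrib_left mult.right_neutral mult_left_mono less_imp_le)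
  qed
  ultimately have "p * (int (s j) - int (parent p q x)) \<le> p * (2 * p)"
    using parent_diff_le[OF p, where a = x and b = "s (Suc j)"] by (simp add: algebra_simps)
  then have "int (s j) \<le> int (parent p q x) + 2 * p"
    using p by (simp add: mult_le_cancel_left_pos)
  with upper show ?case unfolding unfold by simp
qed

lemma decseq_nat_eventually_INF:
  fixes f :: "nat \<Rightarrow> nat"
  assumes "decseq f"
  shows "\<forall>\<^sub>F n in sequentially. f n = (INF n. f n)"
proof -
  obtain N where N: "f N = (INF n. f n)"
    using Inf_nat_def1[of "range f"] by auto
  have "f n = (INF n. f n)" if "N \<le> n" for n
  proof (rule antisym)
    have "f n \<le> f N" using assms that unfolding decseq_def by blast
    with N show "f n \<le> (INF n. f n)" by simp
    show "(INF n. f n) \<le> f n" by (rule cINF_lower) simp_all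
  qed
  then show ?thesis by (rule eventually_sequentiallyI)
qed

lemma parent_branch_near_run_states:
  assumes "0 < q" "q < p" "run_states D p q w s" "D \<subseteq> {-p..<p}"
  obtains m where "m 0 = 0" "\<And>k. parent p q (m (Suc k)) = m k"
    "\<And>k. m k \<le> s k \<and> int (s k) \<le> int (m k) + 2 * p"
proof -
  have p: "0 < p" "0 \<le> q" using assms(1,2) by simp_all
  define h where "h j n = (parent p q ^^ n) (s (j + n))" for j n
  define m where "m j = (INF n. h j n)" for j
  have "h j (Suc n) \<le> h j n" for j n
  proof -
    have "h j (Suc n) = (parent p q ^^ n) (parent p q (s (Suc (j + n))))"
      unfolding h_def by (simp add: funpow_swap1)
    also have "\<dots> \<le> h j n"
      unfolding h_def using mono_parent[OF p] run_states_parent_bounds(1)[OF assms]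
      by (rule funpow_mono)
    finally show ?thesis .
  qed
  then have ev: "\<forall>\<^sub>F n in sequentially. h j n = m j" for j
    unfolding m_def by (intro decseq_nat_eventually_INF decseq_SucI)
  have "parent p q (m (Suc j)) = m j" for j
  proof -
    obtain N where "\<forall>n\<ge>N. h j n = m j \<and> h (Suc j) n = m (Suc j)"
      using eventually_conj[OF ev ev] unfolding eventually_sequentially by blast
    then have "m j = h j (Suc N)" "m (Suc j) = h (Suc j) N" by simp_all
    moreover have "h j (Suc N) = parent p q (h (Suc j) N)"
      unfolding h_def by simp
    ultimately show ?thesis by simp
  qed
  moreover have bounds: "m k \<le> s k \<and> int (s k) \<le> int (m k) + 2 * p" for k
  proof -
    obtain n where "h k n = m k" using eventually_happens'[OF _ ev] by auto
    then show ?thesis using ancestor_bounds[OF assms, of n k] unfolding h_def by simp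
  qed
  moreover have "m 0 = 0" using bounds[of 0] assms(3) by (simp add: run_states_def)
  ultimately show ?thesis using that by blast
qed

lemma run_states_parent_chain:
  assumes "0 < p" "0 \<le> q" "m 0 = 0" "\<And>k. parent p q (m (Suc k)) = m k"
  shows "run_states (alphA p) p q (\<lambda>k. q * int (m (Suc k)) - p * int (m k)) m"
  using assms parent_digit_bounds[OF assms(1,2), of "m (Suc k)" for k]
  unfolding run_states_def alphA_def by auto

theorem mainTheorem12:
  fixes p q :: int
  assumes "p > q" and "q > 1" and "coprime p q" and "p < 2 * q"
  shows "rho p q ` omega_lang (alphB p q) p q = rho p q ` omega_lang (alphA p) p q"
proof
  have q0: "q \<noteq> 0" using assms(2) by simp
  have "alphA p \<subseteq> alphB p q" using assms(4) unfolding alphA_def alphB_def by auto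
  with q0 show "rho p q ` omega_lang (alphA p) p q \<subseteq> rho p q ` omega_lang (alphB p q) p q"
    by (intro image_mono omega_lang_mono)
  show "rho p q ` omega_lang (alphB p q) p q \<subseteq> rho p q ` omega_lang (alphA p) p q"
  proof (rule image_subsetI)
    fix w assume "w \<in> omega_lang (alphB p q) p q"
    then obtain s where s: "run_states (alphB p q) p q w s"
      using omega_lang_iff_run_states[OF q0] by blast
    have "alphB p q \<subseteq> {-p..<p}" using assms(1) unfolding alphB_def by auto
    then obtain m where m: "m 0 = 0" "\<And>k. parent p q (m (Suc k)) = m k"
      "\<And>k. m k \<le> s k \<and> int (s k) \<le> int (m k) + 2 * p"
      using parent_branch_near_run_states[OF _ assms(1) s] assms(2) by auto
    define w' where "w' k = q * int (m (Suc k)) - p * int (m k)" for k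
    have m_run: "run_states (alphA p) p q w' m"
      unfolding w'_def using assms(1,2) m(1,2) by (intro run_states_parent_chain) simp_all
    have "rho p q w = rho p q w'"
    proof (rule rho_eq_if_run_states_close[OF _ assms(1) _ _ s m_run])
      show "\<bar>int (s k) - int (m k)\<bar> \<le> 2 * p" for k using m(3)[of k] by simp
    qed (use assms(2) in \<open>simp_all add: alphA_def alphB_def\<close>)
    moreover have "w' \<in> omega_lang (alphA p) p q"
      using m_run omega_lang_iff_run_states[OF q0] by blast
    ultimately show "rho p q w \<in> rho p q ` omega_lang (alphA p) p q" by simp
  qed
qed

end
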